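(* Let $\rho\in\mathbb R$, let $\mathbf a=(a_{m,n})_{m,n=1}^\infty$ be a matrix with complex entries and let $\kappa_{\mathbf a}$ be a Dirichlet series kernel on $\mathbb H_\rho$ with coefficient matrix $\mathbf a$. Then the following are equivalent: (i) $\kappa_{\mathbf a}$ is positive semi-definite on $\mathbb H_\rho$; (ii) $\mathbf a$ is formally positive semi-definite. Moreover, if (i) holds, then for every positive integer $n$ the analytic symbol $A_{n,\mathbf a}$ belongs to $\mathscr H_{\mathbf a}$ and $a_{m,n}=\langle A_{n,\mathbf a},A_{m,\mathbf a}\rangle_{\mathscr H_{\mathbf a}}$ for all $m,n\ge1$.
   Context: $\mathbb H_\rho=\{s\in\mathbb C:\Re(s)>\rho\}$. A double Dirichlet series $\sum_{m,n\ge1}c_{m,n}m^{-s}n^{-u}$ is regularly convergent at $(s_0,u_0)$ if the double series converges there and, for all integers $m,n\ge1$, $\sum_{m}c_{m,n}m^{-s_0}$ and $\sum_{n}c_{m,n}n^{-u_0}$ converge. For a complex matrix $\mathbf a$, $\kappa_{\mathbf a}(s,u)=\sum_{m,n\ge1}a_{m,n}m^{-s}n^{-\bar u}$ is a Dirichlet series kernel on $\mathbb H_\rho$ if $(s,u)\mapsto\kappa_{\mathbf a}(s,\bar u)$ is regularly convergent at every point of $\mathbb H_\rho\times\mathbb H_\rho$. A kernel $\kappa$ on a set $X$ is positive semi-definite if every matrix $(\kappa(x_i,x_j))_{i,j=1}^N$ ($x_i\in X$) is positive semi-definite. The matrix $\mathbf a$ is formally positive semi-definite if the kernel $(m,n)\mapsto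 a_{m,n}$ on $\mathbb N$ is positive semi-definite (i.e. all finite sections $(a_{m,n})_{m,n\in F}$ are positive semi-definite). If $\kappa_{\mathbf a}$ is positive semi-definite, $\mathscr H_{\mathbf a}$ is the reproducing kernel Hilbert space of functions on $\mathbb H_\rho$ with kernel $\kappa_{\mathbf a}$ (i.e. $\kappa_{\mathbf a}(\cdot,t)\in\mathscr H_{\mathbf a}$ and $\langle f,\kappa_{\mathbf a}(\cdot,t)\rangle=f(t)$). The analytic symbols of $\mathbf a$ are the Dirichlet series $A_{n,\mathbf a}(s)=\sum_{m\ge1}a_{m,n}m^{-s}$, $s\in\mathbb H_\rho$, $n\ge1$. *)

theory Defs
  imports "HOL-Analysis.Analysis"
begin

definition halfplane :: "real \<Rightarrow> complex set" where
  "halfplane \<rho> = {s. Re s > \<rho>}"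

definition dpartial :: "(nat \<Rightarrow> nat \<Rightarrow> complex) \<Rightarrow> nat \<Rightarrow> nat \<Rightarrow> complex" where
  "dpartial c M N = (\<Sum>m=1..M. \<Sum>n=1..N. c m n)"

definition dconverges_to :: "(nat \<Rightarrow> nat \<Rightarrow> complex) \<Rightarrow> complex \<Rightarrow> bool" where
  "dconverges_to c L \<longleftrightarrow>
     ((\<lambda>(M, N). dpartial c M N) \<longlongrightarrow> L) (sequentially \<times>\<^sub>F sequentially)"

definition dsum :: "(nat \<Rightarrow> nat \<Rightarrow> complex) \<Rightarrow> complex" where
  "dsum c = Lim (sequentially \<times>\<^sub>F sequentially) (\<lambda>(M, N). dpartial c M N)"

definition regularly_convergent :: "(nat \<Rightarrow> nat \<Rightarrow> complex) \<Rightarrow> bool" where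
  "regularly_convergent c \<longleftrightarrow>
     (\<exists>L. dconverges_to c L) \<and>
     (\<forall>n\<ge>1. summable (\<lambda>k. c (Suc k) n)) \<and>
     (\<forall>m\<ge>1. summable (\<lambda>k. c m (Suc k)))"

definition dterm :: "(nat \<Rightarrow> nat \<Rightarrow> complex) \<Rightarrow> complex \<Rightarrow> complex \<Rightarrow> nat \<Rightarrow> nat \<Rightarrow> complex" where
  "dterm a s u m n = a m n * (of_nat m) powr (- s) * (of_nat n) powr (- u)"

definition kappa :: "(nat \<Rightarrow> nat \<Rightarrow> complex) \<Rightarrow> complex \<Rightarrow> complex \<Rightarrow> complex" where
  "kappa a s u = dsum (dterm a s (cnj u))"

definition dirichlet_series_kernel :: "(nat \<Rightarrow> nat \<Rightarrow> complex) \<Rightarrow> real \<Rightarrow> bool" where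
  "dirichlet_series_kernel a \<rho> \<longleftrightarrow>
     (\<forall>s\<in>halfplane \<rho>. \<forall>u\<in>halfplane \<rho>. regularly_convergent (dterm a s u))"

definition psd_kernel :: "('x \<Rightarrow> 'x \<Rightarrow> complex) \<Rightarrow> 'x set \<Rightarrow> bool" where
  "psd_kernel K X \<longleftrightarrow>
     (\<forall>N x. (\<forall>i<N. x i \<in> X) \<longrightarrow>
        (\<forall>i<N. \<forall>j<N. K (x i) (x j) = cnj (K (x j) (x i))) \<and>
        (\<forall>c :: nat \<Rightarrow> complex.
           Im (\<Sum>i<N. \<Sum>j<N. cnj (c i) * K (x i) (x j) * c j) = 0 \<and>
           Re (\<Sum>i<N. \<Sum>j<N. cnj (c i) * K (x i) (x j) * c j) \<ge> 0))"

text \<open>Reproducing kernel Hilbert space on X with kernel K: V is a complex vector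
  space of functions on X (represented as functions vanishing outside X), ip is an
  inner product on V (linear in the first argument), V is complete for the induced
  norm, the kernel sections K(.,t) belong to V and reproduce point evaluations.\<close>
definition rkhs ::
  "('x \<Rightarrow> 'x \<Rightarrow> complex) \<Rightarrow> 'x set \<Rightarrow> ('x \<Rightarrow> complex) set \<Rightarrow>
   (('x \<Rightarrow> complex) \<Rightarrow> ('x \<Rightarrow> complex) \<Rightarrow> complex) \<Rightarrow> bool" where
  "rkhs K X V ip \<longleftrightarrow>
     (\<forall>f\<in>V. \<forall>x. x \<notin> X \<longrightarrow> f x = 0) \<and>
     (\<lambda>x. 0) \<in> V \<and>
     (\<forall>f\<in>V. \<forall>g\<in>V. (\<lambda>x. f x + g x) \<in> V) \<and>
     (\<forall>c. \<forall>f\<in>V. (\<lambda>x. c * f x) \<in> V) \<and>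
     (\<forall>f\<in>V. \<forall>g\<in>V. \<forall>h\<in>V. ip (\<lambda>x. f x + g x) h = ip f h + ip g h) \<and>
     (\<forall>c. \<forall>f\<in>V. \<forall>g\<in>V. ip (\<lambda>x. c * f x) g = c * ip f g) \<and>
     (\<forall>f\<in>V. \<forall>g\<in>V. ip g f = cnj (ip f g)) \<and>
     (\<forall>f\<in>V. Re (ip f f) \<ge> 0 \<and> (ip f f = 0 \<longrightarrow> f = (\<lambda>x. 0))) \<and>
     (\<forall>F :: nat \<Rightarrow> 'x \<Rightarrow> complex. (\<forall>k. F k \<in> V) \<longrightarrow>
        (\<forall>e>0. \<exists>N. \<forall>p\<ge>N. \<forall>q\<ge>N.
            Re (ip (\<lambda>x. F p x - F q x) (\<lambda>x. F p x - F q x)) < e) \<longrightarrow>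
        (\<exists>f\<in>V. (\<lambda>k. Re (ip (\<lambda>x. F k x - f x) (\<lambda>x. F k x - f x))) \<longlonglongrightarrow> 0)) \<and>
     (\<forall>t\<in>X. (\<lambda>x. if x \<in> X then K x t else 0) \<in> V \<and>
        (\<forall>f\<in>V. ip f (\<lambda>x. if x \<in> X then K x t else 0) = f t))"

definition analytic_symbol :: "(nat \<Rightarrow> nat \<Rightarrow> complex) \<Rightarrow> real \<Rightarrow> nat \<Rightarrow> complex \<Rightarrow> complex" where
  "analytic_symbol a \<rho> n s =
     (if s \<in> halfplane \<rho> then (\<Sum>k. a (Suc k) n * (of_nat (Suc k)) powr (- s)) else 0)"

end

theory Submission
  imports Defs
begin

(*
  The kernel kappa_a(s, t) is the limit of the diagonal partial sums
  sum_{m,n <= M} a_{m,n} m^-s n^-conj(t), i.e. of compressions of the matrix a by the vectors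
  (n^-conj(t))_n; a limit of compressions of a positive semi-definite kernel is positive
  semi-definite. This gives (ii) => (i).

  Conversely, choose a frequency h with h (ln p - ln q) not in 2 pi Z for all p <> q and probe the
  kernel at the points x_j = rho + 3 + i j h, j < J, with weights w_{m,J,j} = m^(rho+3-i j h) / J.
  The combination sum_j w_{m,J,j} q^-conj(x_j) equals (m/q)^(rho+3) times an average of the
  characters e^(i j h (ln q - ln m)), hence tends to the Kronecker delta at m. By Tannery's theorem,
  dominated through the bound |a_{p,q}| <= B (p q)^(rho+1) that regular convergence provides, the
  compressions sum_{i,j} conj(w_{m,K,i}) kappa_a(x_i, x_j) w_{n,J,j} of kappa_a tend to a_{m,n},
  which gives (i) => (ii). In the reproducing kernel Hilbert space these compressions form the Gram
  matrix of f_{n,J} = sum_j w_{n,J,j} kappa_a(., x_j). So f_{n,J} is a Cauchy sequence; its limit is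
  A_n because norm convergence implies pointwise convergence, and
  a_{m,n} = lim conj <f_{m,J}, A_n> = <A_n, A_m>.
*)

section \<open>Double series\<close>

lemma tendsto_compose_pair:
  assumes "((\<lambda>(m, n). f m n) \<longlongrightarrow> l) (sequentially \<times>\<^sub>F sequentially)"
    and "filterlim g sequentially F" "filterlim g' sequentially F"
  shows "((\<lambda>x. f (g x) (g' x)) \<longlongrightarrow> l) F"
  using filterlim_compose[OF assms(1) filterlim_Pair[OF assms(2,3)]] by simp

lemma dsum_eqI: "dconverges_to c L \<Longrightarrow> dsum c = L"
  unfolding dsum_def dconverges_to_def
  by (rule tendsto_Lim) (simp_all add: prod_filter_eq_bot)

lemma dconverges_to_diagonal:
  assumes "dconverges_to c L"
  shows "(\<lambda>N. dpartial c N N) \<longlonglongrightarrow> L"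
  using assms unfolding dconverges_to_def by (rule tendsto_compose_pair[OF _ filterlim_ident filterlim_ident])

lemma dconverges_to_iterated:
  assumes "dconverges_to c L"
    and col: "\<And>n. n \<ge> 1 \<Longrightarrow> (\<lambda>M. \<Sum>m=1..M. c m n) \<longlonglongrightarrow> col n"
  shows "(\<lambda>N. \<Sum>n=1..N. col n) \<longlonglongrightarrow> L"
proof (rule LIMSEQ_I)
  fix r :: real assume "r > 0"
  then have "\<forall>\<^sub>F (M, N) in sequentially \<times>\<^sub>F sequentially. dist (dpartial c M N) L < r/2"
    using assms(1) unfolding dconverges_to_def
    by (auto dest: tendstoD[where e = "r/2"] simp: case_prod_beta')
  then obtain N0 where N0: "\<And>M N. M \<ge> N0 \<Longrightarrow> N \<ge> N0 \<Longrightarrow> dist (dpartial c M N) L < r/2"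
    unfolding eventually_prod_sequentially by auto
  have bound: "dist (\<Sum>n=1..N. col n) L \<le> r/2" if "N \<ge> N0" for N
  proof (rule Lim_bounded[where M = N0])
    have "(\<lambda>M. dpartial c M N) \<longlonglongrightarrow> (\<Sum>n=1..N. col n)"
      unfolding dpartial_def by (subst sum.swap) (intro tendsto_sum col, simp)
    then show "(\<lambda>M. dist (dpartial c M N) L) \<longlonglongrightarrow> dist (\<Sum>n=1..N. col n) L"
      by (intro tendsto_intros)
    show "\<forall>M\<ge>N0. dist (dpartial c M N) L \<le> r/2"
      using N0 that by (auto intro: less_imp_le)
  qed
  have "norm ((\<Sum>n=1..N. col n) - L) < r" if "N \<ge> N0" for N
    using bound[OF that] \<open>r > 0\<close> by (simp add: dist_norm)
  then show "\<exists>N0. \<forall>N\<ge>N0. norm ((\<Sum>n=1..N. col n) - L) < r"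
    by blast
qed

lemma dpartial_corner:
  assumes "m \<ge> 1" "n \<ge> 1"
  shows "c m n = dpartial c m n - dpartial c (m - 1) n - dpartial c m (n - 1) + dpartial c (m - 1) (n - 1)"
  using assms by (cases m; cases n) (simp_all add: dpartial_def algebra_simps)

lemma dconverges_to_terms_tendsto_0:
  assumes "dconverges_to c L"
  shows "((\<lambda>(m, n). c m n) \<longlongrightarrow> 0) (sequentially \<times>\<^sub>F sequentially)"
proof -
  have lim: "((\<lambda>x. dpartial c (g x) (g' x)) \<longlongrightarrow> L) (sequentially \<times>\<^sub>F sequentially)"
    if "filterlim g sequentially (sequentially \<times>\<^sub>F sequentially)"
      "filterlim g' sequentially (sequentially \<times>\<^sub>F sequentially)" for g g'
    using assms that unfolding dconverges_to_def by (rule tendsto_compose_pair)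
  have pred: "filterlim (\<lambda>x. f x - 1) sequentially (sequentially \<times>\<^sub>F sequentially)"
    if "filterlim f sequentially (sequentially \<times>\<^sub>F sequentially)" for f :: "nat \<times> nat \<Rightarrow> nat"
    using filterlim_compose[OF filterlim_minus_const_nat_at_top that] .
  have "((\<lambda>x. dpartial c (fst x) (snd x) - dpartial c (fst x - 1) (snd x) - dpartial c (fst x) (snd x - 1)
      + dpartial c (fst x - 1) (snd x - 1)) \<longlongrightarrow> L - L - L + L) (sequentially \<times>\<^sub>F sequentially)"
    by (intro tendsto_intros lim pred filterlim_fst filterlim_snd)
  moreover have "\<forall>\<^sub>F x in sequentially \<times>\<^sub>F sequentially. dpartial c (fst x) (snd x)
      - dpartial c (fst x - 1) (snd x) - dpartial c (fst x) (snd x - 1) + dpartial c (fst x - 1) (snd x - 1)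
      = c (fst x) (snd x)"
    unfolding eventually_prod_sequentially
    by (intro exI[of _ 1] allI impI) (simp only: fst_conv snd_conv dpartial_corner[symmetric])
  ultimately show ?thesis
    by (simp add: tendsto_cong case_prod_beta')
qed

lemma regularly_convergent_bounded:
  assumes rc: "regularly_convergent c"
  shows "\<exists>B. \<forall>m\<ge>1. \<forall>n\<ge>1. norm (c m n) \<le> B"
proof -
  obtain L where "dconverges_to c L"
    using rc unfolding regularly_convergent_def by auto
  from tendstoD[OF dconverges_to_terms_tendsto_0[OF this], of 1]
  obtain N0 where N0: "\<And>m n. m \<ge> N0 \<Longrightarrow> n \<ge> N0 \<Longrightarrow> norm (c m n) < 1"
    unfolding eventually_prod_sequentially by auto
  have "\<exists>B\<ge>0. \<forall>k. norm (c m (Suc k)) \<le> B" if "m \<ge> 1" for m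
    using rc that unfolding regularly_convergent_def by (meson BseqD less_imp_le summable_imp_Bseq)
  then obtain R where R: "\<And>m k. m \<ge> 1 \<Longrightarrow> 0 \<le> R m \<and> norm (c m (Suc k)) \<le> R m"
    by metis
  have "\<exists>B\<ge>0. \<forall>k. norm (c (Suc k) n) \<le> B" if "n \<ge> 1" for n
    using rc that unfolding regularly_convergent_def by (meson BseqD less_imp_le summable_imp_Bseq)
  then obtain C where C: "\<And>n k. n \<ge> 1 \<Longrightarrow> 0 \<le> C n \<and> norm (c (Suc k) n) \<le> C n"
    by metis
  define B where "B = 1 + (\<Sum>i=1..N0. R i) + (\<Sum>i=1..N0. C i)"
  have sums_nonneg: "0 \<le> (\<Sum>i=1..N0. R i)" "0 \<le> (\<Sum>i=1..N0. C i)"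
    using R[of _ 0] C[of _ 0] by (auto intro: sum_nonneg)
  have "norm (c m n) \<le> B" if "m \<ge> 1" "n \<ge> 1" for m n
  proof (cases "m \<le> N0 \<or> n \<le> N0")
    case True
    have "norm (c m n) \<le> R m" "norm (c m n) \<le> C n"
      using R[of m "n - 1"] C[of n "m - 1"] that by simp_all
    moreover have "R m \<le> (\<Sum>i=1..N0. R i)" if "m \<le> N0"
      using that \<open>m \<ge> 1\<close> R[of _ 0] by (intro member_le_sum) auto
    moreover have "C n \<le> (\<Sum>i=1..N0. C i)" if "n \<le> N0"
      using that \<open>n \<ge> 1\<close> C[of _ 0] by (intro member_le_sum) auto
    ultimately show ?thesis
      using True sums_nonneg unfolding B_def by linarith
  next
    case False
    then show ?thesis
      using N0[of m n] sums_nonneg unfolding B_def by simp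
  qed
  then show ?thesis
    by blast
qed

section \<open>Positive semi-definite kernels\<close>

lemma psd_kernelD:
  fixes c :: "nat \<Rightarrow> complex"
  assumes "psd_kernel K X" "\<forall>i<N. x i \<in> X"
  shows "Im (\<Sum>i<N. \<Sum>j<N. cnj (c i) * K (x i) (x j) * c j) = 0 \<and>
      Re (\<Sum>i<N. \<Sum>j<N. cnj (c i) * K (x i) (x j) * c j) \<ge> 0"
  using assms unfolding psd_kernel_def by blast

lemma psd_kernelI:
  assumes "\<And>N x (c :: nat \<Rightarrow> complex). \<forall>i<N. x i \<in> X \<Longrightarrow>
      Im (\<Sum>i<N. \<Sum>j<N. cnj (c i) * K (x i) (x j) * c j) = 0 \<and>
      Re (\<Sum>i<N. \<Sum>j<N. cnj (c i) * K (x i) (x j) * c j) \<ge> 0"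
  shows "psd_kernel K X"
  unfolding psd_kernel_def
proof (intro allI impI conjI)
  fix N x i j assume x: "\<forall>i<N. x i \<in> X" and "i < N" "j < N"
  define s t where "s = x i" and "t = x j"
  define y where "y k = (if k = 0 then s else t)" for k :: nat
  have y: "\<forall>k<2. y k \<in> X"
    using x \<open>i < N\<close> \<open>j < N\<close> by (simp add: y_def s_def t_def)
  have Q: "Im (cnj a * K s s * a + cnj a * K s t * b + cnj b * K t s * a + cnj b * K t t * b) = 0"
    for a b
    using assms[OF y, of "\<lambda>k. if k = 0 then a else b"] by (simp add: numeral_2_eq_2 y_def)
  \<comment> \<open>Polarization: test the quadratic form with the vectors (1,0), (0,1), (1,1) and (1,i).\<close>
  have "Im (K s s) = 0" "Im (K t t) = 0"
    using Q[of 1 0] Q[of 0 1] by simp_all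
  moreover have "Im (K s s + K s t + K t s + K t t) = 0"
    using Q[of 1 1] by simp
  moreover have "Im (K s s + \<i> * K s t - \<i> * K t s + K t t) = 0"
    using Q[of 1 \<i>] by (simp add: algebra_simps)
  ultimately show "K (x i) (x j) = cnj (K (x j) (x i))"
    unfolding s_def[symmetric] t_def[symmetric] by (simp add: complex_eq_iff)
qed (use assms in blast)+

lemma quadratic_form_compose:
  "(\<Sum>i\<in>I. \<Sum>j\<in>I. cnj (c i) * (\<Sum>k\<in>L. \<Sum>l\<in>L. cnj (u i k) * M k l * u j l) * c j) =
   (\<Sum>k\<in>L. \<Sum>l\<in>L. cnj (\<Sum>i\<in>I. c i * u i k) * M k l * (\<Sum>j\<in>I. c j * u j l))"
proof -
  let ?g = "\<lambda>i j k l. cnj (c i) * cnj (u i k) * M k l * (c j * u j l)"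
  have "(\<Sum>i\<in>I. \<Sum>j\<in>I. cnj (c i) * (\<Sum>k\<in>L. \<Sum>l\<in>L. cnj (u i k) * M k l * u j l) * c j) =
        (\<Sum>i\<in>I. \<Sum>j\<in>I. \<Sum>k\<in>L. \<Sum>l\<in>L. ?g i j k l)"
    by (simp add: sum_distrib_left sum_distrib_right mult_ac)
  also have "\<dots> = (\<Sum>i\<in>I. \<Sum>k\<in>L. \<Sum>j\<in>I. \<Sum>l\<in>L. ?g i j k l)"
    by (rule sum.cong[OF refl], rule sum.swap)
  also have "\<dots> = (\<Sum>k\<in>L. \<Sum>i\<in>I. \<Sum>j\<in>I. \<Sum>l\<in>L. ?g i j k l)"
    by (rule sum.swap)
  also have "\<dots> = (\<Sum>k\<in>L. \<Sum>i\<in>I. \<Sum>l\<in>L. \<Sum>j\<in>I. ?g i j k l)"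
    by (rule sum.cong[OF refl], rule sum.cong[OF refl], rule sum.swap)
  also have "\<dots> = (\<Sum>k\<in>L. \<Sum>l\<in>L. \<Sum>i\<in>I. \<Sum>j\<in>I. ?g i j k l)"
    by (rule sum.cong[OF refl], rule sum.swap)
  also have "\<dots> = (\<Sum>k\<in>L. \<Sum>l\<in>L. cnj (\<Sum>i\<in>I. c i * u i k) * M k l * (\<Sum>j\<in>I. c j * u j l))"
    by (simp add: cnj_sum sum_distrib_left sum_distrib_right mult_ac)
  finally show ?thesis .
qed

lemma Im_Re_nonneg_limit:
  assumes "X \<longlonglongrightarrow> L" "\<And>n. Im (X n) = 0 \<and> Re (X n) \<ge> 0"
  shows "Im L = 0 \<and> Re L \<ge> 0"
proof
  have "(\<lambda>n. Im (X n)) \<longlonglongrightarrow> Im L"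
    using assms(1) by (rule tendsto_Im)
  moreover have "(\<lambda>n. Im (X n)) \<longlonglongrightarrow> 0"
    using assms(2) by simp
  ultimately show "Im L = 0"
    by (rule LIMSEQ_unique)
  show "Re L \<ge> 0"
    using assms by (intro LIMSEQ_le_const[OF tendsto_Re]) auto
qed

lemma psd_kernel_limit_of_compressions:
  fixes K :: "'x \<Rightarrow> 'x \<Rightarrow> complex" and K' :: "'y \<Rightarrow> 'y \<Rightarrow> complex"
    and N :: "nat \<Rightarrow> nat" and u :: "nat \<Rightarrow> 'y \<Rightarrow> nat \<Rightarrow> complex"
  assumes "psd_kernel K X"
    and pts: "\<And>J k. k < N J \<Longrightarrow> x J k \<in> X"
    and lim: "\<And>y y'. y \<in> Y \<Longrightarrow> y' \<in> Y \<Longrightarrow>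
       (\<lambda>J. \<Sum>k<N J. \<Sum>l<N J. cnj (u J y k) * K (x J k) (x J l) * u J y' l) \<longlonglongrightarrow> K' y y'"
  shows "psd_kernel K' Y"
proof (rule psd_kernelI)
  fix n and y :: "nat \<Rightarrow> 'y" and c :: "nat \<Rightarrow> complex" assume y: "\<forall>i<n. y i \<in> Y"
  let ?d = "\<lambda>J k. \<Sum>i<n. c i * u J (y i) k"
  have "(\<lambda>J. \<Sum>k<N J. \<Sum>l<N J. cnj (?d J k) * K (x J k) (x J l) * ?d J l)
      \<longlonglongrightarrow> (\<Sum>i<n. \<Sum>j<n. cnj (c i) * K' (y i) (y j) * c j)"
    unfolding quadratic_form_compose[symmetric] using y by (intro tendsto_intros lim) auto
  moreover have "Im (\<Sum>k<N J. \<Sum>l<N J. cnj (?d J k) * K (x J k) (x J l) * ?d J l) = 0 \<and>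
      Re (\<Sum>k<N J. \<Sum>l<N J. cnj (?d J k) * K (x J k) (x J l) * ?d J l) \<ge> 0" for J
    using pts by (intro psd_kernelD[OF assms(1)]) blast
  ultimately show "Im (\<Sum>i<n. \<Sum>j<n. cnj (c i) * K' (y i) (y j) * c j) = 0 \<and>
      Re (\<Sum>i<n. \<Sum>j<n. cnj (c i) * K' (y i) (y j) * c j) \<ge> 0"
    by (rule Im_Re_nonneg_limit)
qed

section \<open>Dominated series\<close>

lemma summable_Suc_powr: "\<gamma> < -1 \<Longrightarrow> summable (\<lambda>q. real (Suc q) powr \<gamma>)"
  using summable_Suc_iff[where f = "\<lambda>q. real q powr \<gamma>"] by (simp add: summable_real_powr_iff)

lemma norm_mult_le_powr_add:
  fixes u v :: complex
  assumes "norm u \<le> B * real q powr \<alpha>" "norm v \<le> C * real q powr \<beta>"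
  shows "norm (u * v) \<le> B * C * real q powr (\<alpha> + \<beta>)"
proof -
  have "norm (u * v) \<le> (B * real q powr \<alpha>) * (C * real q powr \<beta>)"
    unfolding norm_mult using assms by (intro mult_mono) (auto intro: order_trans[OF norm_ge_zero])
  also have "\<dots> = B * C * real q powr (\<alpha> + \<beta>)"
    by (simp add: mult_ac powr_add)
  finally show ?thesis .
qed

lemma norm_sums_le_powr:
  fixes f :: "nat \<Rightarrow> complex"
  assumes "f sums s" "\<gamma> < -1" and bound: "\<And>p. norm (f p) \<le> D * real (Suc p) powr \<gamma>"
  shows "norm s \<le> D * (\<Sum>p. real (Suc p) powr \<gamma>)"
proof -
  have summable: "summable (\<lambda>p. D * real (Suc p) powr \<gamma>)"
    using \<open>\<gamma> < -1\<close> by (intro summable_mult summable_Suc_powr)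
  have summable_norm_f: "summable (\<lambda>p. norm (f p))"
    using bound by (intro summable_comparison_test[OF _ summable]) simp
  have "norm s \<le> (\<Sum>p. norm (f p))"
    using summable_norm[OF summable_norm_f] sums_unique[OF assms(1)] by simp
  also have "\<dots> \<le> (\<Sum>p. D * real (Suc p) powr \<gamma>)"
    by (rule suminf_le[OF bound summable_norm_f summable])
  also have "\<dots> = D * (\<Sum>p. real (Suc p) powr \<gamma>)"
    using \<open>\<gamma> < -1\<close> by (intro suminf_mult summable_Suc_powr)
  finally show ?thesis .
qed

lemma tendsto_suminf_delta:
  fixes b y :: "'i \<Rightarrow> nat \<Rightarrow> complex"
  assumes "F \<noteq> bot" "n \<ge> 1" "\<alpha> + \<beta> < -1"
    and b_lim: "\<And>q. q \<ge> 1 \<Longrightarrow> ((\<lambda>x. b x q) \<longlongrightarrow> l q) F"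
    and b_bound: "\<And>x q. q \<ge> 1 \<Longrightarrow> norm (b x q) \<le> B * real q powr \<alpha>"
    and y_lim: "\<And>q. q \<ge> 1 \<Longrightarrow> ((\<lambda>x. y x q) \<longlongrightarrow> (if q = n then 1 else 0)) F"
    and y_bound: "\<And>x q. q \<ge> 1 \<Longrightarrow> norm (y x q) \<le> C * real q powr \<beta>"
  shows "((\<lambda>x. \<Sum>q. b x (Suc q) * y x (Suc q)) \<longlongrightarrow> l n) F"
proof -
  have "((\<lambda>x. \<Sum>q. b x (Suc q) * y x (Suc q)) \<longlongrightarrow> (\<Sum>q. l (Suc q) * (if Suc q = n then 1 else 0))) F"
  proof (rule tannerys_theorem[THEN conjunct2, THEN conjunct2])
    show "((\<lambda>x. b x (Suc q) * y x (Suc q)) \<longlongrightarrow> l (Suc q) * (if Suc q = n then 1 else 0)) F" for q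
      by (intro tendsto_mult b_lim y_lim) simp_all
    have "norm (b x (Suc q) * y x (Suc q)) \<le> B * C * real (Suc q) powr (\<alpha> + \<beta>)" for x q
      by (rule norm_mult_le_powr_add[OF b_bound y_bound]) simp_all
    then show "\<forall>\<^sub>F (q, x) in at_top \<times>\<^sub>F F.
        norm (b x (Suc q) * y x (Suc q)) \<le> B * C * real (Suc q) powr (\<alpha> + \<beta>)"
      by (intro always_eventually) auto
    show "summable (\<lambda>q. B * C * real (Suc q) powr (\<alpha> + \<beta>))"
      using assms(3) by (intro summable_mult summable_Suc_powr)
  qed fact
  also have "(\<Sum>q. l (Suc q) * (if Suc q = n then 1 else 0)) = l n"
  proof -
    have "(\<lambda>q. l (Suc q) * (if Suc q = n then 1 else 0)) = (\<lambda>q. if q = n - 1 then l (Suc q) else 0)"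
      using assms(2) by (auto simp: fun_eq_iff)
    then show ?thesis
      using assms(2) by (simp add: suminf_eq_zero_iff sums_unique[OF sums_single, symmetric])
  qed
  finally show ?thesis .
qed

section \<open>Probing with averaged characters\<close>

definition char_average :: "nat \<Rightarrow> real \<Rightarrow> complex" where
  "char_average J t = (\<Sum>j<J. exp (\<i> * of_real (real j * t))) / of_nat J"

lemma norm_char_average_le: "norm (char_average J t) \<le> 1"
proof (cases "J = 0")
  case False
  have "norm (\<Sum>j<J. exp (\<i> * of_real (real j * t))) \<le> (\<Sum>j<J. norm (exp (\<i> * of_real (real j * t))))"
    by (rule norm_sum)
  also have "\<dots> = real J"
    by (simp add: norm_exp_eq_Re)
  finally show ?thesis
    using False by (simp add: char_average_def norm_divide divide_le_eq)
qed (simp add: char_average_def)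

lemma char_average_0: "J > 0 \<Longrightarrow> char_average J 0 = 1"
  by (simp add: char_average_def)

lemma char_average_tendsto_0:
  assumes "exp (\<i> * of_real t) \<noteq> 1"
  shows "(\<lambda>J. char_average J t) \<longlonglongrightarrow> 0"
proof (rule Lim_null_comparison)
  define z where "z = exp (\<i> * of_real t)"
  have "norm z = 1"
    by (simp add: z_def norm_exp_eq_Re)
  have "norm (char_average J t) = norm (z ^ J - 1) / norm (z - 1) / real J" for J
  proof -
    have "exp (\<i> * of_real (real j * t)) = z ^ j" for j
      unfolding z_def by (subst exp_of_nat_mult[symmetric]) (simp add: algebra_simps)
    then show ?thesis
      using assms by (simp add: char_average_def geometric_sum z_def norm_divide norm_mult)
  qed
  moreover have "norm (z ^ J - 1) \<le> 2" for J
    using norm_triangle_ineq4[of "z ^ J" 1] \<open>norm z = 1\<close> by (simp add: norm_power)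
  ultimately have "norm (char_average J t) \<le> (2 / norm (z - 1)) * (1 / real J)" for J
    by (simp add: norm_divide norm_mult divide_right_mono)
  then show "\<forall>\<^sub>F J in sequentially. norm (char_average J t) \<le> (2 / norm (z - 1)) * (1 / real J)"
    by simp
  show "(\<lambda>J. (2 / norm (z - 1)) * (1 / real J)) \<longlonglongrightarrow> 0"
    by (intro tendsto_mult_right_zero lim_const_over_n)
qed

definition separating_frequency :: "real \<Rightarrow> bool" where
  "separating_frequency h \<longleftrightarrow>
     (\<forall>p q :: nat. p \<ge> 1 \<longrightarrow> q \<ge> 1 \<longrightarrow> p \<noteq> q \<longrightarrow>
        exp (\<i> * of_real (h * (ln (real p) - ln (real q)))) \<noteq> 1)"

lemma exists_separating_frequency: "\<exists>h. separating_frequency h"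
proof -
  \<comment> \<open>Only the countably many frequencies 2 pi k / (ln p - ln q) are excluded.\<close>
  define bad where "bad = (\<lambda>(p::nat, q::nat, k::int). 2 * real_of_int k * pi / (ln (real p) - ln (real q)))"
  have "countable (range bad)"
    by simp
  then have "range bad \<noteq> UNIV"
    using uncountable_UNIV_real by metis
  then obtain h where h: "h \<notin> range bad"
    by auto
  have "exp (\<i> * of_real (h * (ln (real p) - ln (real q)))) \<noteq> 1"
    if "p \<ge> 1" "q \<ge> 1" "p \<noteq> q" for p q :: nat
  proof
    assume "exp (\<i> * of_real (h * (ln (real p) - ln (real q)))) = 1"
    then obtain k :: int where "h * (ln (real p) - ln (real q)) = of_int (2 * k) * pi"
      by (auto simp: exp_eq_1)
    moreover have "ln (real p) - ln (real q) \<noteq> 0"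
      using that by auto
    ultimately have "h = bad (p, q, k)"
      by (simp add: bad_def field_simps)
    with h show False
      by auto
  qed
  then show ?thesis
    unfolding separating_frequency_def by blast
qed

lemma of_nat_powr_complex:
  assumes "q > 0"
  shows "of_nat q powr (z::complex) = of_real (real q powr Re z) * exp (\<i> * of_real (Im z * ln (real q)))"
proof -
  have "of_nat q powr z = exp (z * of_real (ln (real q)))"
    using assms by (simp add: powr_def)
  also have "z * of_real (ln (real q)) = of_real (Re z * ln (real q)) + \<i> * of_real (Im z * ln (real q))"
    by (simp add: complex_eq_iff)
  also have "exp \<dots> = of_real (exp (Re z * ln (real q))) * exp (\<i> * of_real (Im z * ln (real q)))"
    by (simp only: exp_add exp_of_real)
  also have "exp (Re z * ln (real q)) = real q powr Re z"
    using assms by (simp add: powr_def mult.commute)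
  finally show ?thesis .
qed

lemma norm_of_nat_powr: "norm (of_nat q powr (z::complex)) = real q powr Re z"
  by (subst norm_powr_real_powr) auto

lemma cnj_of_nat_powr [simp]: "cnj (of_nat q powr z) = of_nat q powr cnj z"
  by (subst cnj_powr) auto

definition probe_point :: "real \<Rightarrow> real \<Rightarrow> nat \<Rightarrow> complex" where
  "probe_point \<sigma> h j = Complex \<sigma> (real j * h)"

definition probe_weight :: "real \<Rightarrow> real \<Rightarrow> nat \<Rightarrow> nat \<Rightarrow> nat \<Rightarrow> complex" where
  "probe_weight \<sigma> h m J j =
     of_real (real m powr \<sigma>) * exp (- (\<i> * of_real (real j * h * ln (real m)))) / of_nat J"

definition probe_coeff :: "real \<Rightarrow> real \<Rightarrow> nat \<Rightarrow> nat \<Rightarrow> nat \<Rightarrow> complex" where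
  "probe_coeff \<sigma> h m J q = (\<Sum>j<J. probe_weight \<sigma> h m J j * of_nat q powr (- cnj (probe_point \<sigma> h j)))"

lemma Re_probe_point [simp]: "Re (probe_point \<sigma> h j) = \<sigma>"
  by (simp add: probe_point_def)

lemma probe_coeff_eq:
  assumes "q \<ge> 1"
  shows "probe_coeff \<sigma> h m J q =
    of_real (real m powr \<sigma> * real q powr (-\<sigma>)) * char_average J (h * (ln (real q) - ln (real m)))"
proof -
  have "probe_weight \<sigma> h m J j * of_nat q powr (- cnj (probe_point \<sigma> h j)) =
      of_real (real m powr \<sigma> * real q powr (-\<sigma>)) *
      exp (\<i> * of_real (real j * (h * (ln (real q) - ln (real m))))) / of_nat J" for j
  proof -
    have "of_nat q powr (- cnj (probe_point \<sigma> h j)) =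
        of_real (real q powr (-\<sigma>)) * exp (\<i> * of_real (real j * h * ln (real q)))"
      using assms by (subst of_nat_powr_complex) (auto simp: probe_point_def)
    moreover have "exp (- (\<i> * of_real (real j * h * ln (real m)))) * exp (\<i> * of_real (real j * h * ln (real q)))
        = exp (\<i> * of_real (real j * (h * (ln (real q) - ln (real m)))))"
      by (subst exp_add[symmetric]) (simp add: algebra_simps)
    ultimately show ?thesis
      unfolding probe_weight_def by (simp add: algebra_simps)
  qed
  then show ?thesis
    unfolding probe_coeff_def char_average_def by (simp add: sum_divide_distrib sum_distrib_left)
qed

lemma norm_probe_coeff_le:
  assumes "q \<ge> 1"
  shows "norm (probe_coeff \<sigma> h m J q) \<le> real m powr \<sigma> * real q powr (-\<sigma>)"
proof -
  have "norm (probe_coeff \<sigma> h m J q) =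
      real m powr \<sigma> * real q powr (-\<sigma>) * norm (char_average J (h * (ln (real q) - ln (real m))))"
    using assms by (simp add: probe_coeff_eq norm_mult)
  also have "\<dots> \<le> real m powr \<sigma> * real q powr (-\<sigma>)"
    using norm_char_average_le by (intro mult_left_le) auto
  finally show ?thesis .
qed

lemma probe_coeff_tendsto:
  assumes "separating_frequency h" "m \<ge> 1" "q \<ge> 1"
  shows "(\<lambda>J. probe_coeff \<sigma> h m J q) \<longlonglongrightarrow> (if q = m then 1 else 0)"
proof (cases "q = m")
  case True
  then have "\<forall>\<^sub>F J in sequentially. probe_coeff \<sigma> h m J q = 1"
    using assms(3)
    by (intro eventually_sequentiallyI[of 1]) (simp add: probe_coeff_eq char_average_0 powr_minus field_simps)
  with True show ?thesis
    by (simp add: tendsto_eventually)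
next
  case False
  have "(\<lambda>J. of_real (real m powr \<sigma> * real q powr (-\<sigma>)) * char_average J (h * (ln (real q) - ln (real m))))
      \<longlonglongrightarrow> of_real (real m powr \<sigma> * real q powr (-\<sigma>)) * 0"
    using assms False unfolding separating_frequency_def by (intro tendsto_intros char_average_tendsto_0) auto
  with False assms(3) show ?thesis
    by (simp add: probe_coeff_eq)
qed

lemma cnj_probe_coeff:
  "cnj (probe_coeff \<sigma> h m J q) = (\<Sum>j<J. cnj (probe_weight \<sigma> h m J j) * of_nat q powr (- probe_point \<sigma> h j))"
  by (simp add: probe_coeff_def)

section \<open>Dirichlet series kernels\<close>

lemma cnj_in_halfplane [simp]: "cnj u \<in> halfplane \<rho> \<longleftrightarrow> u \<in> halfplane \<rho>"
  by (simp add: halfplane_def)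

locale dirichlet_kernel =
  fixes a :: "nat \<Rightarrow> nat \<Rightarrow> complex" and \<rho> :: real
  assumes kernel: "dirichlet_series_kernel a \<rho>"
begin

lemma regularly_convergent_dterm:
  "s \<in> halfplane \<rho> \<Longrightarrow> u \<in> halfplane \<rho> \<Longrightarrow> regularly_convergent (dterm a s u)"
  using kernel unfolding dirichlet_series_kernel_def by blast

lemma analytic_symbol_sums:
  assumes s: "s \<in> halfplane \<rho>" and "n \<ge> 1"
  shows "(\<lambda>k. a (Suc k) n * of_nat (Suc k) powr (-s)) sums analytic_symbol a \<rho> n s"
proof -
  have "summable (\<lambda>k. dterm a s s (Suc k) n)"
    using regularly_convergent_dterm[OF s s] \<open>n \<ge> 1\<close> unfolding regularly_convergent_def by blast
  then have "summable (\<lambda>k. dterm a s s (Suc k) n * (1 / of_nat n powr (-s)))"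
    by (rule summable_mult2)
  moreover have "of_nat n powr (-s) \<noteq> (0::complex)"
    using \<open>n \<ge> 1\<close> by (simp add: powr_def)
  ultimately show ?thesis
    using s by (simp add: dterm_def analytic_symbol_def summable_sums)
qed

lemma dconverges_to_kappa:
  assumes "s \<in> halfplane \<rho>" "u \<in> halfplane \<rho>"
  shows "dconverges_to (dterm a s (cnj u)) (kappa a s u)"
proof -
  obtain L where L: "dconverges_to (dterm a s (cnj u)) L"
    using regularly_convergent_dterm[of s "cnj u"] assms unfolding regularly_convergent_def by auto
  then show ?thesis
    unfolding kappa_def dsum_eqI[OF L] .
qed

lemma kappa_sums:
  assumes s: "s \<in> halfplane \<rho>" and u: "u \<in> halfplane \<rho>"
  shows "(\<lambda>k. analytic_symbol a \<rho> (Suc k) s * of_nat (Suc k) powr (- cnj u)) sums kappa a s u"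
proof -
  have "(\<lambda>M. \<Sum>m=1..M. dterm a s (cnj u) m n) \<longlonglongrightarrow> analytic_symbol a \<rho> n s * of_nat n powr (- cnj u)"
    if "n \<ge> 1" for n
    using sums_mult2[OF analytic_symbol_sums[OF s that], of "of_nat n powr (- cnj u)"]
    by (simp add: sums_def dterm_def sum.atLeast1_atMost_eq)
  from dconverges_to_iterated[OF dconverges_to_kappa[OF s u] this] show ?thesis
    by (simp add: sums_def sum.atLeast1_atMost_eq)
qed

lemma kappa_diagonal:
  assumes "s \<in> halfplane \<rho>" "u \<in> halfplane \<rho>"
  shows "(\<lambda>M. \<Sum>k<M. \<Sum>l<M. cnj (of_nat (Suc k) powr (- cnj s)) * a (Suc k) (Suc l) *
      of_nat (Suc l) powr (- cnj u)) \<longlonglongrightarrow> kappa a s u"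
  using dconverges_to_diagonal[OF dconverges_to_kappa[OF assms]]
  by (simp add: dpartial_def dterm_def sum.atLeast1_atMost_eq mult_ac del: of_nat_Suc)

lemma psd_kernel_kappa:
  assumes "psd_kernel a {1..}"
  shows "psd_kernel (kappa a) (halfplane \<rho>)"
  using assms by (rule psd_kernel_limit_of_compressions[where x = "\<lambda>M k. Suc k"]) (auto intro: kappa_diagonal)

lemma coeff_bound: "\<exists>B. \<forall>p\<ge>1. \<forall>q\<ge>1. norm (a p q) \<le> B * real p powr (\<rho>+1) * real q powr (\<rho>+1)"
proof -
  define s where "s = complex_of_real (\<rho>+1)"
  have "s \<in> halfplane \<rho>"
    by (simp add: s_def halfplane_def)
  then obtain B where B: "\<And>p q. p \<ge> 1 \<Longrightarrow> q \<ge> 1 \<Longrightarrow> norm (dterm a s s p q) \<le> B"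
    using regularly_convergent_bounded[OF regularly_convergent_dterm] by blast
  have "norm (a p q) \<le> B * real p powr (\<rho>+1) * real q powr (\<rho>+1)" if "p \<ge> 1" "q \<ge> 1" for p q
  proof -
    have "norm (dterm a s s p q) = norm (a p q) / (real p powr (\<rho>+1) * real q powr (\<rho>+1))"
      by (simp add: dterm_def norm_mult norm_of_nat_powr s_def powr_minus[of _ "\<rho>+1", simplified] divide_inverse)
    with B[OF that] that show ?thesis
      by (simp add: divide_le_eq mult.assoc)
  qed
  then show ?thesis
    by blast
qed

lemma analytic_symbol_bound:
  assumes s: "s \<in> halfplane \<rho>"
  shows "\<exists>C. \<forall>q\<ge>1. norm (analytic_symbol a \<rho> q s) \<le> C * real q powr (\<rho>+1)"
proof -
  define u where "u = complex_of_real (\<rho>+1)"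
  have "u \<in> halfplane \<rho>"
    by (simp add: u_def halfplane_def)
  then obtain C where C: "\<And>q. norm (analytic_symbol a \<rho> (Suc q) s * of_nat (Suc q) powr (- cnj u)) \<le> C"
    using summable_imp_Bseq[OF sums_summable[OF kappa_sums[OF s]]] by (auto simp: Bseq_def)
  have "norm (analytic_symbol a \<rho> q s) \<le> C * real q powr (\<rho>+1)" if "q \<ge> 1" for q
  proof -
    have "norm (analytic_symbol a \<rho> q s * of_nat q powr (- cnj u)) =
        norm (analytic_symbol a \<rho> q s) / real q powr (\<rho>+1)"
      by (simp add: norm_mult norm_of_nat_powr u_def powr_minus[of _ "\<rho>+1", simplified] divide_inverse)
    with C[of "q - 1"] that show ?thesis
      by (simp add: divide_le_eq)
  qed
  then show ?thesis
    by blast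
qed

end

locale dirichlet_probes = dirichlet_kernel +
  fixes h :: real
  assumes separating: "separating_frequency h"
begin

text \<open>The probes sit on the line Re s = \<rho> + 3, so that the decay q powr -(\<rho> + 3) of their
  coefficients beats the growth q powr (\<rho> + 1) of the coefficients of the kernel by a summable
  factor q powr -2.\<close>

abbreviation pt :: "nat \<Rightarrow> complex" where "pt \<equiv> probe_point (\<rho> + 3) h"
abbreviation wt :: "nat \<Rightarrow> nat \<Rightarrow> nat \<Rightarrow> complex" where "wt \<equiv> probe_weight (\<rho> + 3) h"
abbreviation cf :: "nat \<Rightarrow> nat \<Rightarrow> nat \<Rightarrow> complex" where "cf \<equiv> probe_coeff (\<rho> + 3) h"

lemma probe_point_in_halfplane: "pt j \<in> halfplane \<rho>"
  by (simp add: halfplane_def)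

lemma cf_bound: "q \<ge> 1 \<Longrightarrow> norm (cf m J q) \<le> real m powr (\<rho> + 3) * real q powr (- (\<rho> + 3))"
  by (rule norm_probe_coeff_le)

lemma cf_tendsto: "m \<ge> 1 \<Longrightarrow> q \<ge> 1 \<Longrightarrow> (\<lambda>J. cf m J q) \<longlonglongrightarrow> (if q = m then 1 else 0)"
  using separating by (rule probe_coeff_tendsto)

definition probe_symbol :: "nat \<Rightarrow> nat \<Rightarrow> nat \<Rightarrow> complex" where
  "probe_symbol m K q = (\<Sum>i<K. cnj (wt m K i) * analytic_symbol a \<rho> q (pt i))"

definition probe_gram :: "nat \<Rightarrow> nat \<Rightarrow> nat \<Rightarrow> nat \<Rightarrow> complex" where
  "probe_gram m n K J = (\<Sum>i<K. \<Sum>j<J. cnj (wt m K i) * kappa a (pt i) (pt j) * wt n J j)"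

lemma probe_symbol_sums:
  assumes "q \<ge> 1"
  shows "(\<lambda>p. a (Suc p) q * cnj (cf m K (Suc p))) sums probe_symbol m K q"
proof -
  have "(\<lambda>p. \<Sum>i<K. cnj (wt m K i) * (a (Suc p) q * of_nat (Suc p) powr (- pt i))) sums probe_symbol m K q"
    unfolding probe_symbol_def
    using analytic_symbol_sums[OF probe_point_in_halfplane assms] by (intro sums_sum sums_mult) auto
  then show ?thesis
    by (simp add: cnj_probe_coeff sum_distrib_left mult_ac)
qed

lemma probe_symbol_tendsto:
  assumes "m \<ge> 1" "q \<ge> 1"
  shows "(\<lambda>K. probe_symbol m K q) \<longlonglongrightarrow> a m q"
proof -
  obtain B where B: "\<forall>p\<ge>1. \<forall>q\<ge>1. norm (a p q) \<le> B * real p powr (\<rho>+1) * real q powr (\<rho>+1)"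
    using coeff_bound by blast
  have "(\<lambda>K. \<Sum>p. a (Suc p) q * cnj (cf m K (Suc p))) \<longlonglongrightarrow> a m q"
  proof (rule tendsto_suminf_delta[where b = "\<lambda>_ p. a p q" and l = "\<lambda>p. a p q" and n = m
        and y = "\<lambda>K p. cnj (cf m K p)" and \<alpha> = "\<rho> + 1" and \<beta> = "- (\<rho> + 3)"])
    show "(\<lambda>K. cnj (cf m K p)) \<longlonglongrightarrow> (if p = m then 1 else 0)" if "p \<ge> 1" for p
      using tendsto_cnj[OF cf_tendsto[OF \<open>m \<ge> 1\<close> that]] by (cases "p = m") simp_all
    show "norm (a p q) \<le> (B * real q powr (\<rho> + 1)) * real p powr (\<rho> + 1)" if "p \<ge> 1" for K :: nat and p
      using B that \<open>q \<ge> 1\<close> by (simp add: mult_ac)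
    show "norm (cnj (cf m K p)) \<le> real m powr (\<rho> + 3) * real p powr (- (\<rho> + 3))" if "p \<ge> 1" for K p
      using cf_bound[OF that] by simp
  qed (use assms in auto)
  then show ?thesis
    using sums_unique[OF probe_symbol_sums[OF \<open>q \<ge> 1\<close>]] by simp
qed

lemma probe_symbol_bound:
  obtains C where "\<And>K q. q \<ge> 1 \<Longrightarrow> norm (probe_symbol m K q) \<le> C * real q powr (\<rho> + 1)"
proof -
  obtain B where B: "\<forall>p\<ge>1. \<forall>q\<ge>1. norm (a p q) \<le> B * real p powr (\<rho>+1) * real q powr (\<rho>+1)"
    using coeff_bound by blast
  define S where "S = (\<Sum>p. real (Suc p) powr (-2))"
  have "norm (probe_symbol m K q) \<le> (B * real m powr (\<rho> + 3) * S) * real q powr (\<rho> + 1)"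
    if "q \<ge> 1" for K q
  proof -
    have "norm (a (Suc p) q * cnj (cf m K (Suc p)))
        \<le> (B * real q powr (\<rho> + 1)) * real m powr (\<rho> + 3) * real (Suc p) powr ((\<rho> + 1) + - (\<rho> + 3))"
      for p
      using B[rule_format, of "Suc p" q] that cf_bound[of "Suc p" m K]
      by (intro norm_mult_le_powr_add) (simp_all add: mult_ac)
    from norm_sums_le_powr[OF probe_symbol_sums[OF that] _ this] show ?thesis
      by (simp add: S_def mult_ac)
  qed
  then show ?thesis
    using that by blast
qed

lemma probe_gram_sums:
  "(\<lambda>q. probe_symbol m K (Suc q) * cf n J (Suc q)) sums probe_gram m n K J"
proof -
  have "(\<lambda>q. \<Sum>i<K. \<Sum>j<J. cnj (wt m K i) *
      (analytic_symbol a \<rho> (Suc q) (pt i) * of_nat (Suc q) powr (- cnj (pt j))) * wt n J j) sums probe_gram m n K J"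
    unfolding probe_gram_def
    by (intro sums_sum sums_mult sums_mult2 kappa_sums probe_point_in_halfplane)
  then show ?thesis
    by (simp add: probe_symbol_def probe_coeff_def sum_product mult_ac)
qed

lemma probe_gram_tendsto:
  assumes "m \<ge> 1" "n \<ge> 1"
  shows "((\<lambda>(K, J). probe_gram m n K J) \<longlongrightarrow> a m n) (sequentially \<times>\<^sub>F sequentially)"
proof -
  obtain C where C: "\<And>K q. q \<ge> 1 \<Longrightarrow> norm (probe_symbol m K q) \<le> C * real q powr (\<rho> + 1)"
    using probe_symbol_bound by metis
  have "((\<lambda>(K, J). \<Sum>q. probe_symbol m K (Suc q) * cf n J (Suc q)) \<longlongrightarrow> a m n) (sequentially \<times>\<^sub>F sequentially)"
    unfolding case_prod_beta'
  proof (rule tendsto_suminf_delta[where \<alpha> = "\<rho> + 1" and \<beta> = "- (\<rho> + 3)"])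
    show "((\<lambda>x. probe_symbol m (fst x) q) \<longlongrightarrow> a m q) (sequentially \<times>\<^sub>F sequentially)" if "q \<ge> 1" for q
      using filterlim_compose[OF probe_symbol_tendsto[OF \<open>m \<ge> 1\<close> that] filterlim_fst] .
    show "((\<lambda>x. cf n (snd x) q) \<longlongrightarrow> (if q = n then 1 else 0)) (sequentially \<times>\<^sub>F sequentially)"
      if "q \<ge> 1" for q
      using filterlim_compose[OF cf_tendsto[OF \<open>n \<ge> 1\<close> that] filterlim_snd] .
  qed (use C cf_bound assms in \<open>auto simp: prod_filter_eq_bot\<close>)
  then show ?thesis
    using sums_unique[OF probe_gram_sums] by (simp add: case_prod_beta')
qed

lemma probe_gram_diagonal: "m \<ge> 1 \<Longrightarrow> n \<ge> 1 \<Longrightarrow> (\<lambda>J. probe_gram m n J J) \<longlonglongrightarrow> a m n"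
  by (rule tendsto_compose_pair[OF probe_gram_tendsto filterlim_ident filterlim_ident])

lemma psd_kernel_coeffs:
  assumes "psd_kernel (kappa a) (halfplane \<rho>)"
  shows "psd_kernel a {1..}"
  using assms
  by (rule psd_kernel_limit_of_compressions[where N = id and x = "\<lambda>_. pt" and u = "\<lambda>J m. wt m J"])
     (auto simp: probe_point_in_halfplane probe_gram_diagonal[unfolded probe_gram_def])

end

section \<open>Reproducing kernel Hilbert spaces\<close>

lemma tendsto_0_of_norm_square_tendsto_0:
  fixes z :: "nat \<Rightarrow> complex"
  assumes "(\<lambda>J. norm (z J) ^ 2) \<longlonglongrightarrow> 0"
  shows "z \<longlonglongrightarrow> 0"
proof -
  have "(\<lambda>J. sqrt (norm (z J) ^ 2)) \<longlonglongrightarrow> sqrt 0"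
    using assms by (rule tendsto_real_sqrt)
  then show ?thesis
    by (simp add: tendsto_norm_zero_cancel)
qed

locale rkhs_space =
  fixes K :: "'x \<Rightarrow> 'x \<Rightarrow> complex" and X :: "'x set" and V :: "('x \<Rightarrow> complex) set"
    and ip :: "('x \<Rightarrow> complex) \<Rightarrow> ('x \<Rightarrow> complex) \<Rightarrow> complex"
  assumes rkhs: "rkhs K X V ip"
begin

abbreviation kernel_fun :: "'x \<Rightarrow> 'x \<Rightarrow> complex" where
  "kernel_fun t \<equiv> (\<lambda>x. if x \<in> X then K x t else 0)"

abbreviation sqdist :: "('x \<Rightarrow> complex) \<Rightarrow> ('x \<Rightarrow> complex) \<Rightarrow> real" where
  "sqdist f g \<equiv> Re (ip (\<lambda>x. f x - g x) (\<lambda>x. f x - g x))"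

lemma vanishes_outside: "f \<in> V \<Longrightarrow> x \<notin> X \<Longrightarrow> f x = 0"
  using rkhs unfolding rkhs_def by blast

lemma zero_in: "(\<lambda>x. 0) \<in> V"
  using rkhs unfolding rkhs_def by blast

lemma add_in: "f \<in> V \<Longrightarrow> g \<in> V \<Longrightarrow> (\<lambda>x. f x + g x) \<in> V"
  using rkhs unfolding rkhs_def by blast

lemma scale_in: "f \<in> V \<Longrightarrow> (\<lambda>x. c * f x) \<in> V"
  using rkhs unfolding rkhs_def by blast

lemma diff_in: "f \<in> V \<Longrightarrow> g \<in> V \<Longrightarrow> (\<lambda>x. f x - g x) \<in> V"
  using add_in[of f "\<lambda>x. (-1) * g x"] scale_in[of g "-1"] by simp

lemma lincomb_in: "(\<And>i. i < (J::nat) \<Longrightarrow> G i \<in> V) \<Longrightarrow> (\<lambda>x. \<Sum>i<J. c i * G i x) \<in> V"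
  by (induction J) (simp_all add: zero_in add_in scale_in)

lemma kernel_fun_in: "t \<in> X \<Longrightarrow> kernel_fun t \<in> V"
  using rkhs unfolding rkhs_def by blast

lemma reproducing: "t \<in> X \<Longrightarrow> f \<in> V \<Longrightarrow> ip f (kernel_fun t) = f t"
  using rkhs unfolding rkhs_def by blast

lemma complete:
  assumes "\<And>k. F k \<in> V" "((\<lambda>(p, q). sqdist (F p) (F q)) \<longlongrightarrow> 0) (sequentially \<times>\<^sub>F sequentially)"
  obtains f where "f \<in> V" "(\<lambda>k. sqdist (F k) f) \<longlonglongrightarrow> 0"
proof -
  have completeness: "\<forall>F. (\<forall>k. F k \<in> V) \<longrightarrow> (\<forall>e>0. \<exists>N. \<forall>p\<ge>N. \<forall>q\<ge>N. sqdist (F p) (F q) < e) \<longrightarrow>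
      (\<exists>f\<in>V. (\<lambda>k. sqdist (F k) f) \<longlonglongrightarrow> 0)"
    using rkhs unfolding rkhs_def by (elim conjE) assumption
  have "\<exists>N. \<forall>p\<ge>N. \<forall>q\<ge>N. sqdist (F p) (F q) < e" if "e > 0" for e
  proof -
    have "\<forall>\<^sub>F (p, q) in sequentially \<times>\<^sub>F sequentially. dist (sqdist (F p) (F q)) 0 < e"
      using tendstoD[OF assms(2) that] by (simp add: case_prod_beta')
    then obtain N where "\<And>p q. p \<ge> N \<Longrightarrow> q \<ge> N \<Longrightarrow> \<bar>sqdist (F p) (F q)\<bar> < e"
      unfolding eventually_prod_sequentially by (auto simp: dist_real_def)
    then show ?thesis
      by (intro exI[of _ N]) (auto simp: abs_less_iff)
  qed
  with completeness assms(1) that show ?thesis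
    by blast
qed

lemma ip_add_left: "f \<in> V \<Longrightarrow> g \<in> V \<Longrightarrow> h \<in> V \<Longrightarrow> ip (\<lambda>x. f x + g x) h = ip f h + ip g h"
  using rkhs unfolding rkhs_def by blast

lemma ip_scale_left: "f \<in> V \<Longrightarrow> g \<in> V \<Longrightarrow> ip (\<lambda>x. c * f x) g = c * ip f g"
  using rkhs unfolding rkhs_def by blast

lemma ip_conj: "f \<in> V \<Longrightarrow> g \<in> V \<Longrightarrow> ip g f = cnj (ip f g)"
  using rkhs unfolding rkhs_def by blast

lemma Re_ip_self_nonneg: "f \<in> V \<Longrightarrow> Re (ip f f) \<ge> 0"
  using rkhs unfolding rkhs_def by blast

lemma ip_self_eq_0: "f \<in> V \<Longrightarrow> ip f f = 0 \<Longrightarrow> f = (\<lambda>x. 0)"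
  using rkhs unfolding rkhs_def by blast

lemma ip_self_real: "f \<in> V \<Longrightarrow> ip f f = of_real (Re (ip f f))"
  using ip_conj[of f f] by (simp add: complex_eq_iff)

lemma ip_scale_right: "f \<in> V \<Longrightarrow> g \<in> V \<Longrightarrow> ip g (\<lambda>x. c * f x) = cnj c * ip g f"
  using ip_conj[of "\<lambda>x. c * f x" g] ip_scale_left[of f g c] ip_conj[of f g] scale_in[of f c] by simp

lemma ip_diff_left: "f \<in> V \<Longrightarrow> g \<in> V \<Longrightarrow> h \<in> V \<Longrightarrow> ip (\<lambda>x. f x - g x) h = ip f h - ip g h"
  using ip_add_left[of f "\<lambda>x. (-1) * g x" h] ip_scale_left[of g h "-1"] scale_in[of g "-1"] by simp

lemma ip_diff_right: "f \<in> V \<Longrightarrow> g \<in> V \<Longrightarrow> h \<in> V \<Longrightarrow> ip h (\<lambda>x. f x - g x) = ip h f - ip h g"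
  using ip_conj[of "\<lambda>x. f x - g x" h] ip_diff_left[of f g h] ip_conj[of f h] ip_conj[of g h] diff_in[of f g]
  by simp

lemma ip_sum_left:
  assumes "\<And>i. i < (J::nat) \<Longrightarrow> G i \<in> V" "g \<in> V"
  shows "ip (\<lambda>x. \<Sum>i<J. c i * G i x) g = (\<Sum>i<J. c i * ip (G i) g)"
  using assms
proof (induction J)
  case 0
  then show ?case
    using ip_scale_left[OF zero_in, of g 0] by simp
next
  case (Suc J)
  then show ?case
    by (simp add: ip_add_left ip_scale_left lincomb_in scale_in)
qed

lemma ip_sum_right:
  assumes "\<And>i. i < (J::nat) \<Longrightarrow> G i \<in> V" "g \<in> V"
  shows "ip g (\<lambda>x. \<Sum>i<J. c i * G i x) = (\<Sum>i<J. cnj (c i) * ip g (G i))"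
proof -
  have "ip g (\<lambda>x. \<Sum>i<J. c i * G i x) = cnj (ip (\<lambda>x. \<Sum>i<J. c i * G i x) g)"
    using assms by (intro ip_conj lincomb_in)
  also have "\<dots> = (\<Sum>i<J. cnj (c i) * cnj (ip (G i) g))"
    using assms by (simp add: ip_sum_left)
  also have "\<dots> = (\<Sum>i<J. cnj (c i) * ip g (G i))"
    using assms by (intro sum.cong refl) (simp add: ip_conj[of "G _" g])
  finally show ?thesis .
qed

lemma cauchy_schwarz:
  assumes f: "f \<in> V" and g: "g \<in> V"
  shows "norm (ip f g) ^ 2 \<le> Re (ip f f) * Re (ip g g)"
proof (cases "ip g g = 0")
  case True
  then have "ip f g = ip f (\<lambda>x. 0 * g x)"
    using ip_self_eq_0[OF g] by simp
  also have "\<dots> = 0"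
    using ip_scale_right[OF g f, of 0] by simp
  finally show ?thesis
    using Re_ip_self_nonneg[OF f] Re_ip_self_nonneg[OF g] by simp
next
  case False
  define G where "G = Re (ip g g)"
  have gg: "ip g g = of_real G"
    using ip_self_real[OF g] by (simp add: G_def)
  have "G > 0"
    using Re_ip_self_nonneg[OF g] False gg unfolding G_def by (metis less_eq_real_def of_real_0)
  define t where "t = ip f g / of_real G"
  have tg: "(\<lambda>x. t * g x) \<in> V"
    using g by (rule scale_in)
  have nz: "cnj (ip f g) * ip f g = of_real (norm (ip f g) ^ 2)"
    by (metis complex_norm_square mult.commute)
  have "ip (\<lambda>x. f x - t * g x) (\<lambda>x. f x - t * g x) =
      ip f f - cnj t * ip f g - t * cnj (ip f g) + t * (cnj t * ip g g)"
    using f g tg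
    by (simp add: ip_diff_left ip_diff_right diff_in ip_scale_left ip_scale_right ip_conj[of f g])
  also have "\<dots> = ip f f - of_real (norm (ip f g) ^ 2 / G)"
    using nz \<open>G > 0\<close> unfolding t_def gg by (simp add: field_simps power2_eq_square)
  finally have "Re (ip f f) - norm (ip f g) ^ 2 / G \<ge> 0"
    using Re_ip_self_nonneg[OF diff_in[OF f tg]] by simp
  with \<open>G > 0\<close> show ?thesis
    by (simp add: G_def divide_le_eq mult.commute)
qed

lemma ip_tendsto_left:
  assumes F: "\<And>J. F J \<in> V" and f: "f \<in> V" and g: "g \<in> V"
    and lim: "(\<lambda>J. sqdist (F J) f) \<longlonglongrightarrow> 0"
  shows "(\<lambda>J. ip (F J) g) \<longlonglongrightarrow> ip f g"
proof -
  have "(\<lambda>J. ip (\<lambda>x. F J x - f x) g) \<longlonglongrightarrow> 0"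
  proof (rule tendsto_0_of_norm_square_tendsto_0, rule Lim_null_comparison)
    show "\<forall>\<^sub>F J in sequentially. norm (norm (ip (\<lambda>x. F J x - f x) g) ^ 2) \<le> sqdist (F J) f * Re (ip g g)"
      using cauchy_schwarz[OF diff_in[OF F f] g] by simp
    show "(\<lambda>J. sqdist (F J) f * Re (ip g g)) \<longlonglongrightarrow> 0"
      using tendsto_mult_left_zero[OF lim] by simp
  qed
  then show ?thesis
    using F f g by (simp add: ip_diff_left LIM_zero_iff)
qed

lemma pointwise_tendsto:
  assumes "\<And>J. F J \<in> V" "f \<in> V" "(\<lambda>J. sqdist (F J) f) \<longlonglongrightarrow> 0" "s \<in> X"
  shows "(\<lambda>J. F J s) \<longlonglongrightarrow> f s"
  using ip_tendsto_left[OF assms(1,2) kernel_fun_in[OF assms(4)] assms(3)] assms by (simp add: reproducing)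

end

locale dirichlet_rkhs = dirichlet_probes a \<rho> h + rkhs_space "kappa a" "halfplane \<rho>" V ip
  for a \<rho> h V ip
begin

definition probe_fun :: "nat \<Rightarrow> nat \<Rightarrow> complex \<Rightarrow> complex" where
  "probe_fun n J = (\<lambda>s. \<Sum>j<J. wt n J j * kernel_fun (pt j) s)"

lemma probe_fun_in: "probe_fun n J \<in> V"
  unfolding probe_fun_def by (intro lincomb_in kernel_fun_in probe_point_in_halfplane)

lemma ip_probe_fun: "ip (probe_fun n J) (probe_fun m K) = probe_gram m n K J"
proof -
  have "ip (kernel_fun (pt j)) (kernel_fun (pt l)) = kappa a (pt l) (pt j)" for j l
    using probe_point_in_halfplane by (simp add: reproducing kernel_fun_in)
  then show ?thesis
    unfolding probe_fun_def probe_gram_def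
    by (simp add: ip_sum_left ip_sum_right lincomb_in kernel_fun_in probe_point_in_halfplane
        sum_distrib_left mult_ac sum.swap[of _ "{..<J}"])
qed

lemma probe_fun_sums:
  assumes "s \<in> halfplane \<rho>"
  shows "(\<lambda>q. analytic_symbol a \<rho> (Suc q) s * cf n J (Suc q)) sums probe_fun n J s"
proof -
  have "(\<lambda>q. \<Sum>j<J. wt n J j * (analytic_symbol a \<rho> (Suc q) s * of_nat (Suc q) powr (- cnj (pt j))))
      sums probe_fun n J s"
    unfolding probe_fun_def using assms kappa_sums[OF assms probe_point_in_halfplane]
    by (intro sums_sum sums_mult) simp
  then show ?thesis
    by (simp add: probe_coeff_def sum_distrib_left mult_ac)
qed

lemma probe_fun_tendsto:
  assumes "s \<in> halfplane \<rho>" "n \<ge> 1"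
  shows "(\<lambda>J. probe_fun n J s) \<longlonglongrightarrow> analytic_symbol a \<rho> n s"
proof -
  obtain C where C: "\<forall>q\<ge>1. norm (analytic_symbol a \<rho> q s) \<le> C * real q powr (\<rho>+1)"
    using analytic_symbol_bound[OF assms(1)] by blast
  have "(\<lambda>J. \<Sum>q. analytic_symbol a \<rho> (Suc q) s * cf n J (Suc q)) \<longlonglongrightarrow> analytic_symbol a \<rho> n s"
    by (rule tendsto_suminf_delta[where \<alpha> = "\<rho> + 1" and \<beta> = "- (\<rho> + 3)"])
      (use C assms cf_tendsto cf_bound in auto)
  then show ?thesis
    using sums_unique[OF probe_fun_sums[OF assms(1)]] by simp
qed

lemma probe_fun_cauchy:
  assumes "n \<ge> 1"
  shows "((\<lambda>(p, q). sqdist (probe_fun n p) (probe_fun n q)) \<longlongrightarrow> 0) (sequentially \<times>\<^sub>F sequentially)"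
proof -
  have gram: "sqdist (probe_fun n p) (probe_fun n q) =
      Re ((probe_gram n n p p - probe_gram n n q p) - (probe_gram n n p q - probe_gram n n q q))" for p q
    by (simp add: ip_diff_left ip_diff_right diff_in probe_fun_in ip_probe_fun)
  have "((\<lambda>x. Re ((probe_gram n n (fst x) (fst x) - probe_gram n n (snd x) (fst x))
      - (probe_gram n n (fst x) (snd x) - probe_gram n n (snd x) (snd x))))
      \<longlongrightarrow> Re ((a n n - a n n) - (a n n - a n n))) (sequentially \<times>\<^sub>F sequentially)"
    by (intro tendsto_intros tendsto_compose_pair[OF probe_gram_tendsto[OF assms assms]]
        filterlim_fst filterlim_snd)
  then show ?thesis
    by (simp add: gram case_prod_beta')
qed

lemma analytic_symbol_in:
  assumes "n \<ge> 1"
  shows "analytic_symbol a \<rho> n \<in> V" "(\<lambda>J. sqdist (probe_fun n J) (analytic_symbol a \<rho> n)) \<longlonglongrightarrow> 0"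
proof -
  obtain f where f: "f \<in> V" "(\<lambda>J. sqdist (probe_fun n J) f) \<longlonglongrightarrow> 0"
    using complete[OF probe_fun_in probe_fun_cauchy[OF assms]] .
  have "f = analytic_symbol a \<rho> n"
  proof
    fix s
    show "f s = analytic_symbol a \<rho> n s"
    proof (cases "s \<in> halfplane \<rho>")
      case True
      with f show ?thesis
        using LIMSEQ_unique[OF pointwise_tendsto[OF probe_fun_in] probe_fun_tendsto[OF True assms]] by blast
    next
      case False
      with f show ?thesis
        by (simp add: vanishes_outside analytic_symbol_def)
    qed
  qed
  with f show "analytic_symbol a \<rho> n \<in> V" "(\<lambda>J. sqdist (probe_fun n J) (analytic_symbol a \<rho> n)) \<longlonglongrightarrow> 0"
    by simp_all
qed

lemma ip_probe_fun_analytic_symbol: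
  assumes "n \<ge> 1"
  shows "ip (probe_fun m J) (analytic_symbol a \<rho> n) = cnj (probe_symbol m J n)"
proof -
  have "ip (kernel_fun (pt j)) (analytic_symbol a \<rho> n) = cnj (analytic_symbol a \<rho> n (pt j))" for j
    using analytic_symbol_in(1)[OF assms] probe_point_in_halfplane
    by (simp add: ip_conj[of _ "kernel_fun _"] kernel_fun_in reproducing)
  then show ?thesis
    unfolding probe_fun_def probe_symbol_def
    using analytic_symbol_in(1)[OF assms]
    by (simp add: ip_sum_left kernel_fun_in probe_point_in_halfplane)
qed

lemma coeff_eq_ip:
  assumes "m \<ge> 1" "n \<ge> 1"
  shows "a m n = ip (analytic_symbol a \<rho> n) (analytic_symbol a \<rho> m)"
proof -
  have "(\<lambda>J. ip (probe_fun m J) (analytic_symbol a \<rho> n)) \<longlonglongrightarrow> ip (analytic_symbol a \<rho> m) (analytic_symbol a \<rho> n)"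
    using assms by (intro ip_tendsto_left probe_fun_in analytic_symbol_in)
  moreover have "(\<lambda>J. ip (probe_fun m J) (analytic_symbol a \<rho> n)) \<longlonglongrightarrow> cnj (a m n)"
    unfolding ip_probe_fun_analytic_symbol[OF assms(2)]
    using assms by (intro tendsto_cnj probe_symbol_tendsto)
  ultimately have "ip (analytic_symbol a \<rho> m) (analytic_symbol a \<rho> n) = cnj (a m n)"
    by (rule LIMSEQ_unique)
  then show ?thesis
    using assms by (simp add: ip_conj[of "analytic_symbol a \<rho> m"] analytic_symbol_in)
qed

end

theorem theorem2p3:
  fixes \<rho> :: real and a :: "nat \<Rightarrow> nat \<Rightarrow> complex"
  assumes "dirichlet_series_kernel a \<rho>"
  shows "(psd_kernel (kappa a) (halfplane \<rho>) \<longleftrightarrow> psd_kernel a {1..}) \<and>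
         (psd_kernel (kappa a) (halfplane \<rho>) \<longrightarrow>
            (\<forall>V ip. rkhs (kappa a) (halfplane \<rho>) V ip \<longrightarrow>
               (\<forall>n\<ge>1. analytic_symbol a \<rho> n \<in> V) \<and>
               (\<forall>m\<ge>1. \<forall>n\<ge>1. a m n = ip (analytic_symbol a \<rho> n) (analytic_symbol a \<rho> m))))"
proof -
  obtain h where h: "separating_frequency h"
    using exists_separating_frequency by blast
  interpret dirichlet_probes a \<rho> h
    using assms h by unfold_locales
  have "psd_kernel (kappa a) (halfplane \<rho>) \<longleftrightarrow> psd_kernel a {1..}"
    using psd_kernel_coeffs psd_kernel_kappa by blast
  moreover have "(\<forall>n\<ge>1. analytic_symbol a \<rho> n \<in> V) \<and>
      (\<forall>m\<ge>1. \<forall>n\<ge>1. a m n = ip (analytic_symbol a \<rho> n) (analytic_symbol a \<rho> m))"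
    if "rkhs (kappa a) (halfplane \<rho>) V ip" for V ip
  proof -
    interpret dirichlet_rkhs a \<rho> h V ip
      using assms h that by unfold_locales
    show ?thesis
      using analytic_symbol_in(1) coeff_eq_ip by blast
  qed
  ultimately show ?thesis
    by blast
qed

end
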